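(* Let $\lambda>0$ and consider the $(1+1)$-dimensional Chaplygin gas system for a density $\rho(t,x)>0$ and a momentum $p(t,x)$, $(t,x)\in\mathbb{R}^2$: $$\frac{\partial\rho}{\partial t}=-\frac{\partial}{\partial x}(p\rho),\qquad \frac{\partial p}{\partial t}=-\frac{\partial}{\partial x}\left(\frac{p^2}{2}-\frac{\lambda}{\rho^2}\right),$$ restricted to states satisfying the constraint $p\rho=\sqrt{2\lambda}$. Assume that the densities $\rho$ under consideration satisfy $0<\alpha:=\inf_{(t,x)\in\mathbb{R}^2}\rho(t,x)$ and $\beta:=\sup_{(t,x)\in\mathbb{R}^2}\rho(t,x)<\infty$. Then the constant state $(p_e,\rho_e)=\left(\sqrt[3]{2},\ \frac{\sqrt{2\lambda}}{\sqrt[3]{2}}\right)$ is a Lyapunov-stable equilibrium point of this system on the constraint set $p\rho=\sqrt{2\lambda}$, where stability is measured in the norm $$\|\Delta u\|^2=\int_{\mathbb{R}}\frac{\sqrt{2\lambda}}{\rho_e\beta}\left(\frac{1}{\rho_e}+\frac{1}{\beta}\right)(\Delta\rho)^2\,\mathrm{d}x,\qquad \Delta u=(p-p_e,\rho-\rho_e),\ \Delta\rho=\rho-\rho_e.$$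
   Context: An equilibrium point $u_e$ of an evolution equation $\partial_t u=X(u)$ is a state with $X(u_e)=0$. It is Lyapunov stable with respect to a norm $\|\cdot\|$ if for every $\varepsilon>0$ there is $\sigma>0$ such that every solution $u(t,\cdot)$ with $\|u(t_0,\cdot)-u_e\|<\sigma$ satisfies $\|u(t,\cdot)-u_e\|<\varepsilon$ for all $t\ge t_0$. The system is Hamiltonian with Hamiltonian $H=\int(\frac12\rho p^2+\frac{\lambda}{\rho})\,\mathrm{d}x$ and Poisson bracket $\{F,G\}=-\int\left(\frac{\delta F}{\delta\rho}\partial_x\frac{\delta G}{\delta p}+\frac{\delta F}{\delta p}\partial_x\frac{\delta G}{\delta\rho}\right)\mathrm{d}x$. *)

theory Defs
  imports "HOL-Analysis.Analysis"
begin

definition chaplygin_solution ::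
  "real \<Rightarrow> (real \<Rightarrow> real \<Rightarrow> real) \<Rightarrow> (real \<Rightarrow> real \<Rightarrow> real) \<Rightarrow> bool" where
  "chaplygin_solution lam rho p \<longleftrightarrow>
     (\<forall>t x. rho t x > 0) \<and>
     (\<forall>t x. \<exists>Dt Dx. ((\<lambda>s. rho s x) has_real_derivative Dt) (at t) \<and>
              ((\<lambda>y. p t y * rho t y) has_real_derivative Dx) (at x) \<and> Dt = - Dx) \<and>
     (\<forall>t x. \<exists>Dt Dx. ((\<lambda>s. p s x) has_real_derivative Dt) (at t) \<and>
              ((\<lambda>y. (p t y)^2 / 2 - lam / (rho t y)^2) has_real_derivative Dx) (at x) \<and> Dt = - Dx)"

definition chaplygin_constraint ::
  "real \<Rightarrow> (real \<Rightarrow> real \<Rightarrow> real) \<Rightarrow> (real \<Rightarrow> real \<Rightarrow> real) \<Rightarrow> bool" where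
  "chaplygin_constraint lam rho p \<longleftrightarrow> (\<forall>t x. p t x * rho t x = sqrt (2 * lam))"

definition p_e :: real where "p_e = root 3 2"
definition rho_e :: "real \<Rightarrow> real" where "rho_e lam = sqrt (2 * lam) / root 3 2"

definition chaplygin_norm_sq ::
  "real \<Rightarrow> real \<Rightarrow> (real \<Rightarrow> real \<Rightarrow> real) \<Rightarrow> real \<Rightarrow> ennreal" where
  "chaplygin_norm_sq lam beta rho t =
     (\<integral>\<^sup>+ x. ennreal (sqrt (2 * lam) / (rho_e lam * beta) * (1 / rho_e lam + 1 / beta)
                      * (rho t x - rho_e lam)^2) \<partial>lborel)"

end

theory Submission
  imports Defs
begin

text \<open>On the constraint set the flux p\<rho> is constant in x, so the continuity equation
  gives d\<rho>/dt = 0: the density does not move. The norm only sees \<rho>, hence it is conserved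
  along every constrained solution, and \<sigma> = \<epsilon> witnesses Lyapunov stability.\<close>

lemma constant_state_chaplygin_solution:
  assumes "c > 0"
  shows "chaplygin_solution lam (\<lambda>t x. c) (\<lambda>t x. q)"
  unfolding chaplygin_solution_def using assms by (auto intro!: exI[of _ 0])

lemma equilibrium_chaplygin_constraint:
  "chaplygin_constraint lam (\<lambda>t x. rho_e lam) (\<lambda>t x. p_e)"
  unfolding chaplygin_constraint_def rho_e_def p_e_def by simp

lemma rho_e_pos: "lam > 0 \<Longrightarrow> rho_e lam > 0"
  unfolding rho_e_def by simp

lemma constrained_density_time_derivative_zero:
  assumes "chaplygin_solution lam rho p" "chaplygin_constraint lam rho p"
  shows "((\<lambda>s. rho s x) has_real_derivative 0) (at t)"
proof -
  obtain Dt Dx where Dt: "((\<lambda>s. rho s x) has_real_derivative Dt) (at t)"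
    and Dx: "((\<lambda>y. p t y * rho t y) has_real_derivative Dx) (at x)" and "Dt = - Dx"
    using assms(1) unfolding chaplygin_solution_def by blast
  have "(\<lambda>y. p t y * rho t y) = (\<lambda>y. sqrt (2 * lam))"
    using assms(2) unfolding chaplygin_constraint_def by auto
  with Dx have "Dx = 0"
    using DERIV_unique DERIV_const by metis
  with Dt \<open>Dt = - Dx\<close> show ?thesis by simp
qed

lemma constrained_density_stationary:
  assumes "chaplygin_solution lam rho p" "chaplygin_constraint lam rho p"
  shows "rho t x = rho t0 x"
  using DERIV_isconst_all constrained_density_time_derivative_zero[OF assms] by metis

lemma constrained_chaplygin_norm_sq_conserved:
  assumes "chaplygin_solution lam rho p" "chaplygin_constraint lam rho p"
  shows "chaplygin_norm_sq lam beta rho t = chaplygin_norm_sq lam beta rho t0"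
  unfolding chaplygin_norm_sq_def using constrained_density_stationary[OF assms] by metis

theorem mainTheorem1:
  fixes lam :: real
  assumes "lam > 0"
  shows "chaplygin_solution lam (\<lambda>t x. rho_e lam) (\<lambda>t x. p_e)
       \<and> chaplygin_constraint lam (\<lambda>t x. rho_e lam) (\<lambda>t x. p_e)
       \<and> (\<forall>\<epsilon>>0. \<exists>\<sigma>>0. \<forall>rho p t0.
            chaplygin_solution lam rho p \<and> chaplygin_constraint lam rho p
            \<and> Inf (range (\<lambda>(t, x). rho t x)) > 0
            \<and> bdd_above (range (\<lambda>(t, x). rho t x))
            \<and> chaplygin_norm_sq lam (Sup (range (\<lambda>(t, x). rho t x))) rho t0 < ennreal (\<sigma>^2)
            \<longrightarrow> (\<forall>t\<ge>t0. chaplygin_norm_sq lam (Sup (range (\<lambda>(t, x). rho t x))) rho t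
                          < ennreal (\<epsilon>^2)))"
proof (intro conjI allI impI)
  show "chaplygin_solution lam (\<lambda>t x. rho_e lam) (\<lambda>t x. p_e)"
    using constant_state_chaplygin_solution rho_e_pos assms by blast
  show "chaplygin_constraint lam (\<lambda>t x. rho_e lam) (\<lambda>t x. p_e)"
    by (rule equilibrium_chaplygin_constraint)
  fix \<epsilon> :: real
  assume "\<epsilon> > 0"
  then show "\<exists>\<sigma>>0. \<forall>rho p t0.
            chaplygin_solution lam rho p \<and> chaplygin_constraint lam rho p
            \<and> Inf (range (\<lambda>(t, x). rho t x)) > 0
            \<and> bdd_above (range (\<lambda>(t, x). rho t x))
            \<and> chaplygin_norm_sq lam (Sup (range (\<lambda>(t, x). rho t x))) rho t0 < ennreal (\<sigma>^2)
            \<longrightarrow> (\<forall>t\<ge>t0. chaplygin_norm_sq lam (Sup (range (\<lambda>(t, x). rho t x))) rho t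
                          < ennreal (\<epsilon>^2))"
    using constrained_chaplygin_norm_sq_conserved by metis
qed

end
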